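(* For every finite alphabet $\Sigma$ with $|\Sigma| \geq 2$, the group $\mathrm{Aut}(\Sigma^\mathbb{Z})$ does not satisfy the Tits alternative. That is, there is a finitely generated subgroup of $\mathrm{Aut}(\Sigma^\mathbb{Z})$ which is not virtually solvable and contains no free group on two generators.
   Context: $\Sigma^\mathbb{Z}$ carries the product topology and the shift $\sigma(x)_i = x_{i+1}$. $\mathrm{Aut}(\Sigma^\mathbb{Z})$ is the group of homeomorphisms $f:\Sigma^\mathbb{Z}\to\Sigma^\mathbb{Z}$ with $f\circ\sigma=\sigma\circ f$ (the group of reversible cellular automata). A group $G$ satisfies the Tits alternative if every finitely generated subgroup $H \le G$ is either virtually solvable (has a solvable subgroup of finite index) or contains a free group on two generators. *)

theory Defs
  imports "HOL-Analysis.Analysis" "HOL-Algebra.Solvable_Groups" "HOL-Algebra.Generated_Groups"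
begin

definition fullshift_top :: "(int \<Rightarrow> 'a) topology" where
  "fullshift_top = product_topology (\<lambda>_. discrete_topology (UNIV :: 'a set)) UNIV"

definition shift :: "(int \<Rightarrow> 'a) \<Rightarrow> (int \<Rightarrow> 'a)" where
  "shift x = (\<lambda>i. x (i + 1))"

definition aut_shift :: "((int \<Rightarrow> 'a) \<Rightarrow> (int \<Rightarrow> 'a)) monoid" where
  "aut_shift = \<lparr> carrier = {f. homeomorphic_map fullshift_top fullshift_top f \<and> f \<circ> shift = shift \<circ> f},
                 mult = (\<circ>), one = id \<rparr>"

definition finitely_generated_subgroup :: "('g, 'b) monoid_scheme \<Rightarrow> 'g set \<Rightarrow> bool" where
  "finitely_generated_subgroup G H \<longleftrightarrow> (\<exists>S. finite S \<and> S \<subseteq> carrier G \<and> H = generate G S)"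

definition virtually_solvable :: "('g, 'b) monoid_scheme \<Rightarrow> bool" where
  "virtually_solvable G \<longleftrightarrow>
     (\<exists>K. subgroup K G \<and> finite (rcosets\<^bsub>G\<^esub> K) \<and> solvable (G\<lparr>carrier := K\<rparr>))"

text \<open>Words in two letters: (True/False = a/b, True/False = exponent +1/-1).\<close>
fun reduced_word :: "(bool \<times> bool) list \<Rightarrow> bool" where
  "reduced_word (x # y # w) = (\<not> (fst x = fst y \<and> snd x \<noteq> snd y) \<and> reduced_word (y # w))"
| "reduced_word _ = True"

definition eval_word :: "('g, 'b) monoid_scheme \<Rightarrow> 'g \<Rightarrow> 'g \<Rightarrow> (bool \<times> bool) list \<Rightarrow> 'g" where
  "eval_word G a b w = foldr (\<lambda>(l, s) acc. (let g = (if l then a else b) in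
        (if s then g else inv\<^bsub>G\<^esub> g)) \<otimes>\<^bsub>G\<^esub> acc) w \<one>\<^bsub>G\<^esub>"

definition contains_free_group_rank2 :: "('g, 'b) monoid_scheme \<Rightarrow> bool" where
  "contains_free_group_rank2 G \<longleftrightarrow>
     (\<exists>a\<in>carrier G. \<exists>b\<in>carrier G. \<forall>w. w \<noteq> [] \<and> reduced_word w \<longrightarrow> eval_word G a b w \<noteq> \<one>\<^bsub>G\<^esub>)"

end

theory Submission
  imports Defs
begin

text \<open>
  Cut configurations into blocks of 19 cells, each carrying a head bit and two 3-bit tracks. The
  group is generated by a conveyor belt, which moves upper tracks one block to the right and lower
  tracks one block to the left within every maximal run of adjacent blocks, and by the gates, which
  permute the upper track of each block whose head bit is set.

  Every element is a conveyor power followed by a cellwise permutation of the tracks, and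
  conjugating a cellwise map by the conveyor gives a cellwise map. Hence all commutators are
  cellwise and have order dividing \<open>(8\<^sup>8)!\<close>, so the nonempty reduced word \<open>[a, b]\<^bsup>(8\<^sup>8)!\<^esup>\<close> is
  trivial for all \<open>a\<close>, \<open>b\<close>.

  On the configuration with a block at every multiple of 19 and the head bit set only at 0, the
  conjugate of a gate by the \<open>k\<close>-th conveyor power permutes the \<open>k\<close>-th block alone. By pigeonhole, a
  subgroup of finite index contains, for two blocks \<open>i \<noteq> j\<close> and each permutation \<open>p\<close> of a family
  of six that is closed under commutators, an element acting as \<open>p\<close> at \<open>i\<close> and \<open>p\<^sup>-\<^sup>1\<close> at \<open>j\<close>.
  Commutators of such elements are again of this form, so no term of the derived series of the
  subgroup is trivial.
\<close>

section \<open>The automorphism group of the full shift\<close>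

lemma topspace_fullshift_top [simp]: "topspace fullshift_top = UNIV"
  by (simp add: fullshift_top_def)

lemma continuous_map_fullshift_coordinate:
  "continuous_map fullshift_top (discrete_topology UNIV) (\<lambda>x. x i)"
  unfolding fullshift_top_def by (rule continuous_map_product_projection) simp

lemma openin_fullshift_cylinder:
  "openin fullshift_top {y. \<forall>i\<in>{-N..N::int}. y (k + i) = x (k + i)}"
proof -
  have coordinate: "openin fullshift_top {y. y i = a}" for i a
    using openin_continuous_map_preimage[OF continuous_map_fullshift_coordinate, of "{a}" i]
    by simp
  have "openin fullshift_top ((\<Inter>i\<in>{-N..N}. {y. y (k + i) = x (k + i)}) \<inter> topspace fullshift_top)"
    by (rule openin_INT) (auto intro: coordinate)
  moreover have "(\<Inter>i\<in>{-N..N}. {y. y (k + i) = x (k + i)}) \<inter> topspace fullshift_top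
      = {y. \<forall>i\<in>{-N..N::int}. y (k + i) = x (k + i)}"
    by auto
  ultimately show ?thesis by simp
qed

lemma continuous_map_fullshift_if_local:
  fixes F :: "(int \<Rightarrow> 'a) \<Rightarrow> int \<Rightarrow> 'a"
  assumes "\<And>k. \<exists>N. \<forall>x y. (\<forall>i\<in>{-N..N::int}. x (k + i) = y (k + i)) \<longrightarrow> F x k = F y k"
  shows "continuous_map fullshift_top fullshift_top F"
proof -
  have "continuous_map fullshift_top (discrete_topology UNIV) (\<lambda>x. F x k)" for k
    unfolding continuous_map_def
  proof (intro conjI allI impI)
    obtain N where N: "\<forall>x y. (\<forall>i\<in>{-N..N::int}. x (k + i) = y (k + i)) \<longrightarrow> F x k = F y k"
      using assms by blast
    show "(\<lambda>x. F x k) \<in> topspace fullshift_top \<rightarrow> topspace (discrete_topology UNIV)"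
      by simp
    fix U :: "'a set"
    show "openin fullshift_top {x \<in> topspace fullshift_top. F x k \<in> U}"
    proof (subst openin_subopen, intro ballI)
      fix x assume x: "x \<in> {x \<in> topspace fullshift_top. F x k \<in> U}"
      have "{y. \<forall>i\<in>{-N..N}. y (k + i) = x (k + i)} \<subseteq> {x \<in> topspace fullshift_top. F x k \<in> U}"
        using N x by (auto; metis)
      then show "\<exists>T. openin fullshift_top T \<and> x \<in> T \<and> T \<subseteq> {x \<in> topspace fullshift_top. F x k \<in> U}"
        using openin_fullshift_cylinder[of N k x] by blast
    qed
  qed
  then show ?thesis
    unfolding fullshift_top_def by (simp add: continuous_map_componentwise_UNIV)
qed

lemma aut_shift_mult [simp]: "f \<otimes>\<^bsub>aut_shift\<lparr>carrier := X\<rparr>\<^esub> g = f \<circ> g" "f \<otimes>\<^bsub>aut_shift\<^esub> g = f \<circ> g"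
  and aut_shift_one [simp]: "\<one>\<^bsub>aut_shift\<lparr>carrier := X\<rparr>\<^esub> = id" "\<one>\<^bsub>aut_shift\<^esub> = id"
  by (simp_all add: aut_shift_def)

lemma aut_shift_pow [simp]: "f [^]\<^bsub>aut_shift\<lparr>carrier := X\<rparr>\<^esub> (n::nat) = f ^^ n"
  by (induction n) (simp_all add: funpow_Suc_right del: funpow.simps)

lemma group_aut_shift: "group aut_shift"
proof (rule groupI)
  fix f g :: "(int \<Rightarrow> 'a) \<Rightarrow> int \<Rightarrow> 'a"
  assume "f \<in> carrier aut_shift" "g \<in> carrier aut_shift"
  then show "f \<otimes>\<^bsub>aut_shift\<^esub> g \<in> carrier aut_shift"
    by (auto simp: aut_shift_def intro: homeomorphic_map_compose) (metis comp_assoc)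
next
  fix f :: "(int \<Rightarrow> 'a) \<Rightarrow> int \<Rightarrow> 'a"
  assume f: "f \<in> carrier aut_shift"
  then have "homeomorphic_map fullshift_top fullshift_top f"
    by (simp add: aut_shift_def)
  then obtain g where g: "homeomorphic_maps fullshift_top fullshift_top f g"
    by (auto simp: homeomorphic_map_maps)
  then have g_inv: "\<And>y. g (f y) = y" "\<And>y. f (g y) = y"
    by (auto simp: homeomorphic_maps_map)
  have f_shift: "f \<circ> shift = shift \<circ> f"
    using f by (simp add: aut_shift_def)
  have "f (shift (g y)) = shift y" for y
    using fun_cong[OF f_shift, of "g y"] g_inv by simp
  then have "g \<circ> shift = shift \<circ> g"
    by (metis comp_apply g_inv(1) ext)
  moreover have "homeomorphic_map fullshift_top fullshift_top g"
    using g homeomorphic_maps_imp_map homeomorphic_maps_sym by blast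
  ultimately show "\<exists>g\<in>carrier aut_shift. g \<otimes>\<^bsub>aut_shift\<^esub> f = \<one>\<^bsub>aut_shift\<^esub>"
    using g_inv by (auto simp: aut_shift_def fun_eq_iff)
qed (auto simp: aut_shift_def comp_assoc)

lemma aut_shiftI:
  assumes "continuous_map fullshift_top fullshift_top f" "continuous_map fullshift_top fullshift_top g"
    and "f \<circ> g = id" "g \<circ> f = id" "f \<circ> shift = shift \<circ> f"
  shows "f \<in> carrier aut_shift"
proof -
  have "homeomorphic_maps fullshift_top fullshift_top f g"
    unfolding homeomorphic_maps_def using assms by (auto simp: fun_eq_iff)
  then show ?thesis
    using assms(5) homeomorphic_maps_imp_map by (auto simp: aut_shift_def)
qed

lemma inv_aut_shift_eq:
  assumes "f \<in> carrier aut_shift" "f \<circ> g = id"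
  shows "inv\<^bsub>aut_shift\<^esub> f = g"
proof -
  have "inv\<^bsub>aut_shift\<^esub> f = (inv\<^bsub>aut_shift\<^esub> f \<circ> f) \<circ> g"
    using assms(2) by (simp add: comp_assoc)
  then show ?thesis
    using group.l_inv[OF group_aut_shift assms(1)] by simp
qed


section \<open>Group-theoretic criteria\<close>

definition commutator_word :: "(bool \<times> bool) list" where
  "commutator_word = [(True, True), (False, True), (True, False), (False, False)]"

lemma reduced_word_commutator_power: "reduced_word (concat (replicate n commutator_word))"
proof -
  have "reduced_word (concat (replicate n commutator_word)) \<and>
    (concat (replicate n commutator_word) = [] \<or> hd (concat (replicate n commutator_word)) = (True, True))"
  proof (induction n)
    case (Suc n)
    then show ?case
      by (cases "concat (replicate n commutator_word)") (auto simp: commutator_word_def)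
  qed simp
  then show ?thesis ..
qed

lemma (in group) eval_word_commutator_power:
  assumes "a \<in> carrier G" "b \<in> carrier G"
  shows "eval_word G a b (concat (replicate n commutator_word)) = (a \<otimes> b \<otimes> inv a \<otimes> inv b) [^] n"
proof (induction n)
  case (Suc n)
  have "eval_word G a b (concat (replicate (Suc n) commutator_word))
      = a \<otimes> (b \<otimes> (inv a \<otimes> (inv b \<otimes> eval_word G a b (concat (replicate n commutator_word)))))"
    by (simp add: eval_word_def commutator_word_def)
  also have "\<dots> = (a \<otimes> b \<otimes> inv a \<otimes> inv b) \<otimes> (a \<otimes> b \<otimes> inv a \<otimes> inv b) [^] n"
    using Suc assms by (simp add: m_assoc)
  also have "\<dots> = (a \<otimes> b \<otimes> inv a \<otimes> inv b) [^] Suc n"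
    using assms by (intro nat_pow_Suc2[symmetric]) simp
  finally show ?case .
qed (simp add: eval_word_def)

lemma (in group) not_contains_free_group_rank2_if_commutator_torsion:
  fixes N :: nat
  assumes "N > 0"
    and "\<And>a b. a \<in> carrier G \<Longrightarrow> b \<in> carrier G \<Longrightarrow> (a \<otimes> b \<otimes> inv a \<otimes> inv b) [^] N = \<one>"
  shows "\<not> contains_free_group_rank2 G"
  unfolding contains_free_group_rank2_def
proof clarify
  fix a b assume a: "a \<in> carrier G" and b: "b \<in> carrier G"
    and free: "\<forall>w. w \<noteq> [] \<and> reduced_word w \<longrightarrow> eval_word G a b w \<noteq> \<one>"
  have "concat (replicate N commutator_word) \<noteq> []"
    using assms(1) by (simp add: commutator_word_def)
  moreover have "eval_word G a b (concat (replicate N commutator_word)) = \<one>"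
    using eval_word_commutator_power[OF a b] assms(2)[OF a b] by simp
  ultimately show False
    using free reduced_word_commutator_power by blast
qed

lemma (in group) finite_index_pigeonhole:
  fixes g :: "nat \<Rightarrow> 'i \<Rightarrow> 'a"
  assumes K: "subgroup K G" and "finite (rcosets K)" "finite I"
    and g: "\<And>n \<iota>. \<iota> \<in> I \<Longrightarrow> g n \<iota> \<in> carrier G"
  shows "\<exists>m n. m \<noteq> n \<and> (\<forall>\<iota>\<in>I. g m \<iota> \<otimes> inv (g n \<iota>) \<in> K)"
proof -
  define cosets where "cosets n = (\<lambda>\<iota>\<in>I. K #> g n \<iota>)" for n
  have "range cosets \<subseteq> PiE I (\<lambda>_. rcosets K)"
    using rcosetsI[OF subgroup.subset[OF K] g] by (auto simp: cosets_def)
  moreover have "finite (PiE I (\<lambda>_. rcosets K))"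
    using assms by (simp add: finite_PiE)
  ultimately have "\<not> inj cosets"
    using finite_imageD finite_subset infinite_UNIV_nat by blast
  then obtain m n where "m \<noteq> n" "cosets m = cosets n"
    unfolding inj_def by blast
  moreover have "g m \<iota> \<otimes> inv (g n \<iota>) \<in> K" if "\<iota> \<in> I" "cosets m = cosets n" for \<iota>
  proof -
    have "K #> g n \<iota> = K #> g m \<iota>"
      using fun_cong[OF that(2), of \<iota>] that(1) by (simp add: cosets_def)
    then have "g m \<iota> \<in> K #> g n \<iota>"
      using repr_independenceD[OF K g[OF that(1)]] by blast
    then show ?thesis
      using subgroup.rcos_module_imp[OF K is_group g[OF that(1)]] by blast
  qed
  ultimately show ?thesis
    by blast
qed

text \<open>By induction, every term of the derived series contains a witness for each \<open>P \<iota>\<close>.\<close>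
lemma (in group) not_solvable_if_commutator_closed_family:
  fixes P :: "'i \<Rightarrow> 'a \<Rightarrow> bool" and left right :: "'i \<Rightarrow> 'i"
  assumes "\<iota>\<^sub>0 \<in> I"
    and witness: "\<And>\<iota>. \<iota> \<in> I \<Longrightarrow> \<exists>f\<in>carrier G. P \<iota> f"
    and left_right: "\<And>\<iota>. \<iota> \<in> I \<Longrightarrow> left \<iota> \<in> I \<and> right \<iota> \<in> I"
    and commutator: "\<And>\<iota> f g. \<lbrakk>\<iota> \<in> I; f \<in> carrier G; g \<in> carrier G; P (left \<iota>) f; P (right \<iota>) g\<rbrakk>
          \<Longrightarrow> P \<iota> (f \<otimes> g \<otimes> inv f \<otimes> inv g)"
    and nontrivial: "\<not> P \<iota>\<^sub>0 \<one>"
  shows "\<not> solvable G"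
proof
  have derived: "\<forall>\<iota>\<in>I. \<exists>f\<in>(derived G ^^ n) (carrier G). P \<iota> f" for n
  proof (induction n)
    case (Suc n)
    show ?case
    proof
      fix \<iota> assume "\<iota> \<in> I"
      with Suc left_right obtain f g where fg: "f \<in> (derived G ^^ n) (carrier G)" "g \<in> (derived G ^^ n) (carrier G)"
        and "P (left \<iota>) f" "P (right \<iota>) g"
        by blast
      then have "P \<iota> (f \<otimes> g \<otimes> inv f \<otimes> inv g)"
        using commutator \<open>\<iota> \<in> I\<close> exp_of_derived_in_carrier[of "carrier G" n] by blast
      moreover have "f \<otimes> g \<otimes> inv f \<otimes> inv g \<in> (derived G ^^ Suc n) (carrier G)"
        using fg unfolding funpow.simps comp_def derived_def by (blast intro: generate.incl)
      ultimately show "\<exists>f\<in>(derived G ^^ Suc n) (carrier G). P \<iota> f" ..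
    qed
  qed (simp add: witness)
  assume "solvable G"
  then obtain n where "(derived G ^^ n) (carrier G) = {\<one>}"
    using solvable_iff_trivial_derived_seq by blast
  then show False
    using derived[of n] nontrivial \<open>\<iota>\<^sub>0 \<in> I\<close> by auto
qed

lemma bij_funpow_fact_card_eq_id:
  fixes p :: "'b::finite \<Rightarrow> 'b"
  assumes "bij p"
  shows "p ^^ fact CARD('b \<Rightarrow> 'b) = id"
proof -
  define M where "M = CARD('b \<Rightarrow> 'b)"
  have "\<not> inj_on (\<lambda>n. p ^^ n) {0..M}"
  proof
    assume "inj_on (\<lambda>n. p ^^ n) {0..M}"
    then have "card {0..M} \<le> card (UNIV :: ('b \<Rightarrow> 'b) set)"
      by (rule card_inj_on_le) auto
    then show False by (simp add: M_def)
  qed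
  then obtain i j where ij: "i < j" "j \<le> M" "p ^^ i = p ^^ j"
    unfolding inj_on_def by (metis atLeastAtMost_iff linorder_neqE_nat)
  have "p ^^ (j - i) = id"
  proof
    fix z
    obtain w where w: "z = (p ^^ i) w"
      using bij_betw_funpow[OF assms] by (metis bij_pointE)
    have "p ^^ j = p ^^ (j - i) \<circ> p ^^ i"
      using ij(1) by (simp flip: funpow_add)
    then have "(p ^^ (j - i)) z = (p ^^ j) w"
      by (simp add: w)
    then show "(p ^^ (j - i)) z = id z"
      using ij(3) w by simp
  qed
  moreover have "(j - i) dvd fact M"
    using ij by (intro dvd_fact) auto
  moreover obtain k where "fact M = (j - i) * k"
    using \<open>(j - i) dvd fact M\<close> by (rule dvdE)
  ultimately show ?thesis
    unfolding M_def[symmetric] by (simp add: funpow_mult[symmetric])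
qed


section \<open>Blocks carrying two tracks\<close>

type_synonym track = "bool \<times> bool \<times> bool"

locale two_symbols =
  fixes sym0 sym1 :: 'a
  assumes sym0_neq_sym1: "sym0 \<noteq> sym1"
begin

definition is_bit :: "(int \<Rightarrow> 'a) \<Rightarrow> int \<Rightarrow> bool" where
  "is_bit x p \<longleftrightarrow> x p = sym0 \<or> x p = sym1"

text \<open>A block at \<open>s\<close> is the word \<open>1111 0 h 0 u 0 u 0 u 0 l 0 l 0 l 0\<close> on \<open>[s, s + 18]\<close>: a marker,
  a head bit \<open>h\<close>, and the lamp bits of an upper track \<open>u\<close> and a lower track \<open>l\<close>. Every bit after
  the marker is followed by a \<open>0\<close>, so two blocks never overlap.\<close>
definition block :: "(int \<Rightarrow> 'a) \<Rightarrow> int \<Rightarrow> bool" where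
  "block x s \<longleftrightarrow>
     x s = sym1 \<and> x (s+1) = sym1 \<and> x (s+2) = sym1 \<and> x (s+3) = sym1 \<and> x (s+4) = sym0
     \<and> is_bit x (s+5) \<and> x (s+6) = sym0
     \<and> is_bit x (s+7) \<and> x (s+8) = sym0 \<and> is_bit x (s+9) \<and> x (s+10) = sym0
     \<and> is_bit x (s+11) \<and> x (s+12) = sym0 \<and> is_bit x (s+13) \<and> x (s+14) = sym0
     \<and> is_bit x (s+15) \<and> x (s+16) = sym0 \<and> is_bit x (s+17) \<and> x (s+18) = sym0"

lemma block_no_overlap:
  assumes "block x s" "block x (s+d)" "1 \<le> d" "d \<le> 18"
  shows False
proof -
  have "d=1 \<or> d=2 \<or> d=3 \<or> d=4 \<or> d=5 \<or> d=6 \<or> d=7 \<or> d=8 \<or> d=9 \<or> d=10 \<or> d=11 \<or> d=12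
    \<or> d=13 \<or> d=14 \<or> d=15 \<or> d=16 \<or> d=17 \<or> d=18" using assms(3,4) by presburger
  thus False using assms(1,2) sym0_neq_sym1 by (elim disjE) (simp_all add: block_def add.assoc)
qed

lemma block_distance:
  assumes "block x s" "block x s'" "s \<noteq> s'"
  shows "s' \<ge> s + 19 \<or> s \<ge> s' + 19"
proof (rule ccontr)
  assume nt: "\<not> ?thesis"
  show False
  proof (cases "s < s'")
    case True
    then show False using block_no_overlap[of x s "s'-s"] assms nt by auto
  next
    case False
    then show False using block_no_overlap[of x s' "s-s'"] assms nt by auto
  qed
qed

definition lamp_offsets :: "int set" where "lamp_offsets = {7,9,11,13,15,17}"

definition is_lamp :: "(int \<Rightarrow> 'a) \<Rightarrow> int \<Rightarrow> bool" where
  "is_lamp x k \<longleftrightarrow> (\<exists>s. block x s \<and> k - s \<in> lamp_offsets)"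

definition owner :: "(int \<Rightarrow> 'a) \<Rightarrow> int \<Rightarrow> int" where
  "owner x k = (THE s. block x s \<and> k - s \<in> lamp_offsets)"

definition sym_of_bool :: "bool \<Rightarrow> 'a" where "sym_of_bool b = (if b then sym1 else sym0)"

definition bit_at :: "(int \<Rightarrow> 'a) \<Rightarrow> int \<Rightarrow> bool" where "bit_at x p \<longleftrightarrow> x p = sym1"

definition track_bit :: "int \<Rightarrow> track \<Rightarrow> bool" where
  "track_bit dd v =
     (if dd = 7 \<or> dd = 13 then fst v else if dd = 9 \<or> dd = 15 then fst (snd v) else snd (snd v))"

text \<open>\<open>set_tracks x F\<close> writes \<open>F s True\<close> and \<open>F s False\<close> into the upper and lower track of
  every block \<open>s\<close> of \<open>x\<close>, leaving all other cells untouched.\<close>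
definition set_tracks :: "(int \<Rightarrow> 'a) \<Rightarrow> (int \<Rightarrow> bool \<Rightarrow> track) \<Rightarrow> int \<Rightarrow> 'a" where
  "set_tracks x F k =
     (if is_lamp x k
      then sym_of_bool (track_bit (k - owner x k) (F (owner x k) (k - owner x k \<le> 11)))
      else x k)"

definition tracks :: "(int \<Rightarrow> 'a) \<Rightarrow> int \<Rightarrow> bool \<Rightarrow> track" where
  "tracks x s tb =
     (if tb then (bit_at x (s+7), bit_at x (s+9), bit_at x (s+11))
      else (bit_at x (s+13), bit_at x (s+15), bit_at x (s+17)))"

definition head :: "(int \<Rightarrow> 'a) \<Rightarrow> int \<Rightarrow> bool" where "head x s = bit_at x (s+5)"

lemma lamp_owner_unique:
  assumes "block x s" "k - s \<in> lamp_offsets" "block x s'" "k - s' \<in> lamp_offsets"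
  shows "s = s'"
  using block_distance[of x s s'] assms by (auto simp: lamp_offsets_def)

lemma owner_eq: "block x s \<Longrightarrow> k - s \<in> lamp_offsets \<Longrightarrow> owner x k = s"
  unfolding owner_def by (rule the_equality) (auto dest: lamp_owner_unique)

lemma is_lamp_owner: "is_lamp x k \<Longrightarrow> block x (owner x k) \<and> k - owner x k \<in> lamp_offsets"
  unfolding is_lamp_def using owner_eq by metis

lemma set_tracks_lamp:
  "block x s \<Longrightarrow> dd \<in> lamp_offsets \<Longrightarrow> set_tracks x F (s+dd) = sym_of_bool (track_bit dd (F s (dd \<le> 11)))"
  unfolding set_tracks_def using owner_eq[of x s "s+dd"] by (auto simp: is_lamp_def)

lemma set_tracks_not_lamp: "\<not> is_lamp x k \<Longrightarrow> set_tracks x F k = x k"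
  unfolding set_tracks_def by simp

lemma sym_of_bool_is_bit: "sym_of_bool b = sym0 \<or> sym_of_bool b = sym1"
  by (simp add: sym_of_bool_def)

lemma block_cong:
  assumes h: "\<And>dd. 0 \<le> dd \<Longrightarrow> dd \<le> 18 \<Longrightarrow> x (s+dd) = y (s+dd)"
  shows "block x s \<longleftrightarrow> block y s"
  using h[of 0] h[of 1] h[of 2] h[of 3] h[of 4] h[of 5] h[of 6] h[of 7] h[of 8] h[of 9] h[of 10]
    h[of 11] h[of 12] h[of 13] h[of 14] h[of 15] h[of 16] h[of 17] h[of 18]
  by (simp add: block_def is_bit_def)

lemma not_is_lamp_in_block:
  assumes "block x s" "0 \<le> dd" "dd \<le> 18" "dd \<notin> lamp_offsets"
  shows "\<not> is_lamp x (s+dd)"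
proof
  assume "is_lamp x (s+dd)"
  then obtain s' where s': "block x s'" "s + dd - s' \<in> lamp_offsets" unfolding is_lamp_def by auto
  have "s' \<noteq> s" using s' assms by auto
  then show False using block_distance[OF assms(1) s'(1)] s'(2) assms(2,3) by (auto simp: lamp_offsets_def)
qed

lemma set_tracks_preserves_block:
  assumes b: "block x s"
  shows "block (set_tracks x F) s"
proof -
  have nl: "set_tracks x F (s+dd) = x (s+dd)" if "dd \<in> {0,1,2,3,4,5,6,8,10,12,14,16,18}" for dd
    using not_is_lamp_in_block[OF b, of dd] that set_tracks_not_lamp by (auto simp: lamp_offsets_def)
  have lp: "is_bit (set_tracks x F) (s+dd)" if "dd \<in> lamp_offsets" for dd
    using set_tracks_lamp[OF b that] sym_of_bool_is_bit unfolding is_bit_def by metis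
  show ?thesis
    using b nl[of 0] nl[of 1] nl[of 2] nl[of 3] nl[of 4] nl[of 5] nl[of 6] nl[of 8] nl[of 10] nl[of 12]
      nl[of 14] nl[of 16] nl[of 18] lp[of 7] lp[of 9] lp[of 11] lp[of 13] lp[of 15] lp[of 17]
    by (simp add: block_def lamp_offsets_def is_bit_def)
qed

lemma block_set_tracks: "block (set_tracks x F) s \<longleftrightarrow> block x s"
proof
  assume b: "block (set_tracks x F) s"
  show "block x s"
  proof (cases "\<exists>dd. 0 \<le> dd \<and> dd \<le> 18 \<and> is_lamp x (s+dd)")
    case True
    then obtain dd where dd: "0 \<le> dd" "dd \<le> 18" "is_lamp x (s+dd)" by auto
    let ?s' = "owner x (s+dd)"
    have s': "block x ?s'" "s + dd - ?s' \<in> lamp_offsets" using is_lamp_owner[OF dd(3)] by auto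
    show ?thesis
    proof (cases "?s' = s")
      case True then show ?thesis using s' by simp
    next
      case False
      have b2: "block (set_tracks x F) ?s'" using set_tracks_preserves_block[OF s'(1)] .
      show ?thesis using block_distance[OF b b2] False s'(2) dd by (auto simp: lamp_offsets_def)
    qed
  next
    case False
    then have "\<And>dd. 0 \<le> dd \<Longrightarrow> dd \<le> 18 \<Longrightarrow> set_tracks x F (s+dd) = x (s+dd)" using set_tracks_not_lamp by auto
    then show ?thesis using block_cong[of "set_tracks x F" s x] b by simp
  qed
qed (rule set_tracks_preserves_block)

lemma is_lamp_set_tracks: "is_lamp (set_tracks x F) k \<longleftrightarrow> is_lamp x k"
  unfolding is_lamp_def block_set_tracks ..

lemma owner_set_tracks: "owner (set_tracks x F) k = owner x k"
  unfolding owner_def block_set_tracks ..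

lemma tracks_set_tracks: "block x s \<Longrightarrow> tracks (set_tracks x F) s tb = F s tb"
proof -
  assume b: "block x s"
  have r: "bit_at (set_tracks x F) (s+dd) = track_bit dd (F s (dd \<le> 11))" if "dd \<in> lamp_offsets" for dd
    using set_tracks_lamp[OF b that, of F] sym0_neq_sym1 by (simp add: bit_at_def sym_of_bool_def)
  show ?thesis
    using r[of 7] r[of 9] r[of 11] r[of 13] r[of 15] r[of 17]
    by (simp add: tracks_def lamp_offsets_def track_bit_def)
qed

lemma head_set_tracks: "block x s \<Longrightarrow> head (set_tracks x F) s = head x s"
  using not_is_lamp_in_block[of x s 5] set_tracks_not_lamp[of x "s+5" F] by (simp add: head_def bit_at_def lamp_offsets_def)

lemma set_tracks_set_tracks: "set_tracks (set_tracks x F) G = set_tracks x G"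
  by (rule ext) (simp add: set_tracks_def is_lamp_set_tracks owner_set_tracks)

lemma set_tracks_cong: "(\<And>s. block x s \<Longrightarrow> F s = G s) \<Longrightarrow> set_tracks x F = set_tracks x G"
  by (rule ext) (auto simp: set_tracks_def dest: is_lamp_owner)

lemma set_tracks_tracks: "set_tracks x (tracks x) = x"
proof (rule ext)
  fix k
  show "set_tracks x (tracks x) k = x k"
  proof (cases "is_lamp x k")
    case True
    let ?s = "owner x k"
    have s: "block x ?s" "k - ?s \<in> lamp_offsets" using is_lamp_owner[OF True] by auto
    define dd where "dd = k - ?s"
    have k: "k = ?s + dd" using dd_def by simp
    have bt: "is_bit x (?s + dd)" using s(1) s(2) unfolding dd_def[symmetric] lamp_offsets_def block_def by auto
    have "set_tracks x (tracks x) (?s + dd) = x (?s + dd)"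
      using set_tracks_lamp[OF s(1), of dd "tracks x"] s(2) bt unfolding dd_def[symmetric]
      by (auto simp: lamp_offsets_def track_bit_def tracks_def sym_of_bool_def bit_at_def is_bit_def)
    then show ?thesis using k by simp
  next
    case False then show ?thesis by (simp add: set_tracks_not_lamp)
  qed
qed

lemma shift_apply: "shift x k = x (k + 1)"
  by (simp add: shift_def)

lemma block_shift: "block (shift x) s \<longleftrightarrow> block x (s+1)"
  by (simp add: shift_def block_def is_bit_def add_ac)

lemma is_lamp_shift: "is_lamp (shift x) k \<longleftrightarrow> is_lamp x (k+1)"
  unfolding is_lamp_def block_shift
  by (metis add_diff_cancel_right' diff_add_cancel diff_diff_eq2 add.commute)

lemma owner_shift: "is_lamp x (k+1) \<Longrightarrow> owner (shift x) k = owner x (k+1) - 1"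
proof -
  assume a: "is_lamp x (k+1)"
  have e: "k - (owner x (k+1) - 1) = k + 1 - owner x (k+1)" by simp
  show ?thesis using is_lamp_owner[OF a] by (intro owner_eq) (auto simp: block_shift e)
qed

lemma set_tracks_shift: "set_tracks (shift x) F = shift (set_tracks x (\<lambda>s. F (s - 1)))"
proof (rule ext)
  fix k
  show "set_tracks (shift x) F k = shift (set_tracks x (\<lambda>s. F (s - 1))) k"
  proof (cases "is_lamp x (k+1)")
    case True
    define q where "q = owner x (k+1)"
    have o: "owner (shift x) k = q - 1" using owner_shift[OF True] q_def by simp
    have e: "k - (q - 1) = k + 1 - q" by simp
    show ?thesis using True
      by (simp add: set_tracks_def is_lamp_shift shift_apply o e q_def[symmetric])
  next
    case False
    then show ?thesis by (simp add: set_tracks_def is_lamp_shift shift_apply)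
  qed
qed

lemma tracks_shift: "tracks (shift x) s = tracks x (s+1)"
  by (rule ext) (simp add: tracks_def bit_at_def shift_def add_ac)

lemma head_shift: "head (shift x) s = head x (s+1)"
  by (simp add: head_def bit_at_def shift_def add_ac)

lemma window_cong:
  assumes "\<And>j. s \<le> j \<Longrightarrow> j \<le> s + 18 \<Longrightarrow> x j = y j"
  shows "block x s = block y s" "tracks x s = tracks y s" "head x s = head y s"
proof -
  show "block x s = block y s" by (rule block_cong) (use assms in auto)
  show "tracks x s = tracks y s"
    using assms[of "s+7"] assms[of "s+9"] assms[of "s+11"] assms[of "s+13"] assms[of "s+15"] assms[of "s+17"]
    by (intro ext) (simp add: tracks_def bit_at_def)
  show "head x s = head y s"
    using assms[of "s+5"] by (simp add: head_def bit_at_def)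
qed

lemma set_tracks_local:
  assumes xy: "\<And>j. k - 20 \<le> j \<Longrightarrow> j \<le> k + 20 \<Longrightarrow> x j = y j"
    and FG: "\<And>s. k - 17 \<le> s \<Longrightarrow> s \<le> k - 7 \<Longrightarrow> F s = G s"
  shows "set_tracks x F k = set_tracks y G k"
proof -
  have bl: "block x s = block y s" if "k - 17 \<le> s" "s \<le> k - 7" for s
    by (rule window_cong(1)) (use xy that in auto)
  have rng: "k - 17 \<le> s \<and> s \<le> k - 7" if "k - s \<in> lamp_offsets" for s
    using that by (auto simp: lamp_offsets_def)
  have is_lamp: "is_lamp x k = is_lamp y k"
    unfolding is_lamp_def using bl rng by blast
  show ?thesis
  proof (cases "is_lamp x k")
    case True
    then have o: "block x (owner x k)" "k - owner x k \<in> lamp_offsets" using is_lamp_owner by auto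
    have "block y (owner x k)" using bl[of "owner x k"] rng[OF o(2)] o(1) by simp
    then have "owner y k = owner x k" using owner_eq o(2) by blast
    then show ?thesis using True is_lamp FG[of "owner x k"] rng[OF o(2)] by (simp add: set_tracks_def)
  next
    case False
    then show ?thesis using is_lamp xy[of k] by (simp add: set_tracks_def)
  qed
qed

definition local_rule :: "((int \<Rightarrow> 'a) \<Rightarrow> int \<Rightarrow> bool \<Rightarrow> track) \<Rightarrow> bool" where
  "local_rule \<Phi> \<longleftrightarrow> (\<exists>R. \<forall>x y s. (\<forall>j. s - R \<le> j \<and> j \<le> s + R \<longrightarrow> x j = y j) \<longrightarrow> \<Phi> x s = \<Phi> y s)
     \<and> (\<forall>x s. \<Phi> (shift x) s = \<Phi> x (s+1))"

definition rule_map :: "((int \<Rightarrow> 'a) \<Rightarrow> int \<Rightarrow> bool \<Rightarrow> track) \<Rightarrow> (int \<Rightarrow> 'a) \<Rightarrow> int \<Rightarrow> 'a" where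
  "rule_map \<Phi> x = set_tracks x (\<Phi> x)"

lemma continuous_map_rule_map:
  assumes "local_rule \<Phi>"
  shows "continuous_map fullshift_top fullshift_top (rule_map \<Phi>)"
proof (rule continuous_map_fullshift_if_local)
  fix k
  obtain R where R: "\<And>x y s. (\<forall>j. s - R \<le> j \<and> j \<le> s + R \<longrightarrow> x j = y j) \<Longrightarrow> \<Phi> x s = \<Phi> y s"
    using assms unfolding local_rule_def by blast
  define N where "N = \<bar>R\<bar> + 40"
  show "\<exists>N. \<forall>x y. (\<forall>i\<in>{-N..N}. x (k + i) = y (k + i)) \<longrightarrow> rule_map \<Phi> x k = rule_map \<Phi> y k"
  proof (intro exI allI impI)
    fix x y :: "int \<Rightarrow> 'a"
    assume h: "\<forall>i\<in>{-N..N}. x (k + i) = y (k + i)"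
    have h': "x j = y j" if "k - N \<le> j" "j \<le> k + N" for j
      using h[rule_format, of "j - k"] that by auto
    show "rule_map \<Phi> x k = rule_map \<Phi> y k"
      unfolding rule_map_def
    proof (rule set_tracks_local)
      fix j assume "k - 20 \<le> j" "j \<le> k + 20" then show "x j = y j" using h' N_def by auto
    next
      fix s assume "k - 17 \<le> s" "s \<le> k - 7"
      then show "\<Phi> x s = \<Phi> y s" using R[of s x y] h' N_def by auto
    qed
  qed
qed

lemma rule_map_shift_commute:
  assumes "local_rule \<Phi>"
  shows "rule_map \<Phi> \<circ> shift = shift \<circ> rule_map \<Phi>"
proof (rule ext)
  fix x
  have "\<Phi> (shift x) = (\<lambda>s. \<Phi> x (s+1))" using assms unfolding local_rule_def by auto
  then show "(rule_map \<Phi> \<circ> shift) x = (shift \<circ> rule_map \<Phi>) x"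
    by (simp add: rule_map_def set_tracks_shift)
qed


definition gate_rule :: "(track \<Rightarrow> track) \<Rightarrow> (int \<Rightarrow> 'a) \<Rightarrow> int \<Rightarrow> bool \<Rightarrow> track" where
  "gate_rule p x s tb = (if tb \<and> head x s then p (tracks x s tb) else tracks x s tb)"

definition swap_rule :: "(int \<Rightarrow> 'a) \<Rightarrow> int \<Rightarrow> bool \<Rightarrow> track" where
  "swap_rule x s tb = tracks x s (\<not> tb)"

text \<open>After \<open>swap\<close>, it moves upper tracks one block to the right and lower tracks one
  block to the left, turning each maximal run of adjacent blocks into a conveyor belt.\<close>
definition exchange_rule :: "(int \<Rightarrow> 'a) \<Rightarrow> int \<Rightarrow> bool \<Rightarrow> track" where
  "exchange_rule x s tb = (if tb then (if block x (s-19) then tracks x (s-19) False else tracks x s True)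
                 else (if block x (s+19) then tracks x (s+19) True else tracks x s False))"

lemma window_cong_near:
  assumes "\<forall>j. s - 40 \<le> j \<and> j \<le> s + 40 \<longrightarrow> x j = y j" "-21 \<le> d" "d \<le> 21"
  shows "block x (s+d) = block y (s+d)" "tracks x (s+d) = tracks y (s+d)" "head x (s+d) = head y (s+d)"
  using window_cong[of "s+d" x y] assms by auto

lemma local_rule_gate: "local_rule (gate_rule p)"
  unfolding local_rule_def
proof (intro conjI exI allI impI)
  fix x y :: "int \<Rightarrow> 'a" and s
  assume "\<forall>j. s - 40 \<le> j \<and> j \<le> s + 40 \<longrightarrow> x j = y j"
  then show "gate_rule p x s = gate_rule p y s" using window_cong_near[of s x y 0] by (simp add: gate_rule_def fun_eq_iff)
next
  fix x :: "int \<Rightarrow> 'a" and s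
  show "gate_rule p (shift x) s = gate_rule p x (s + 1)" by (simp add: gate_rule_def fun_eq_iff tracks_shift head_shift)
qed

lemma local_rule_swap: "local_rule swap_rule"
  unfolding local_rule_def
proof (intro conjI exI allI impI)
  fix x y :: "int \<Rightarrow> 'a" and s
  assume "\<forall>j. s - 40 \<le> j \<and> j \<le> s + 40 \<longrightarrow> x j = y j"
  then show "swap_rule x s = swap_rule y s" using window_cong_near[of s x y 0] by (simp add: swap_rule_def fun_eq_iff)
next
  fix x :: "int \<Rightarrow> 'a" and s
  show "swap_rule (shift x) s = swap_rule x (s + 1)" by (simp add: swap_rule_def fun_eq_iff tracks_shift)
qed

lemma local_rule_exchange: "local_rule exchange_rule"
  unfolding local_rule_def
proof (intro conjI exI allI impI)
  fix x y :: "int \<Rightarrow> 'a" and s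
  assume h: "\<forall>j. s - 40 \<le> j \<and> j \<le> s + 40 \<longrightarrow> x j = y j"
  have a: "block x (s-19) = block y (s-19)" "tracks x (s-19) = tracks y (s-19)"
    using window_cong_near[OF h, of "-19"] by auto
  have b: "block x (s+19) = block y (s+19)" "tracks x (s+19) = tracks y (s+19)"
    using window_cong_near[OF h, of "19"] by auto
  have c: "tracks x s = tracks y s" using window_cong_near[OF h, of 0] by auto
  show "exchange_rule x s = exchange_rule y s" using a b c by (simp add: exchange_rule_def fun_eq_iff)
next
  fix x :: "int \<Rightarrow> 'a" and s
  have e: "s - 19 + 1 = s + 1 - (19::int)" "s + 19 + 1 = s + 1 + (19::int)" by simp_all
  show "exchange_rule (shift x) s = exchange_rule x (s + 1)" by (simp add: exchange_rule_def fun_eq_iff tracks_shift block_shift e)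
qed

definition gate :: "(track \<Rightarrow> track) \<Rightarrow> (int \<Rightarrow> 'a) \<Rightarrow> int \<Rightarrow> 'a" where
  "gate p = rule_map (gate_rule p)"

definition swap :: "(int \<Rightarrow> 'a) \<Rightarrow> int \<Rightarrow> 'a" where
  "swap = rule_map swap_rule"

definition exchange :: "(int \<Rightarrow> 'a) \<Rightarrow> int \<Rightarrow> 'a" where
  "exchange = rule_map exchange_rule"

lemma gate_gate: "gate p (gate q x) = gate (p \<circ> q) x"
  unfolding gate_def rule_map_def set_tracks_set_tracks
  by (rule set_tracks_cong) (simp add: gate_rule_def fun_eq_iff tracks_set_tracks head_set_tracks)

lemma gate_comp: "gate p \<circ> gate q = gate (p \<circ> q)"
  by (rule ext) (simp add: gate_gate)

lemma gate_id: "gate id = id"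
proof
  fix x
  show "gate id x = id x"
    unfolding gate_def rule_map_def id_apply
    by (subst (2) set_tracks_tracks[symmetric], rule set_tracks_cong) (simp add: gate_rule_def fun_eq_iff)
qed

lemma swap_swap: "swap (swap x) = x"
  unfolding swap_def rule_map_def set_tracks_set_tracks
  by (subst (2) set_tracks_tracks[symmetric], rule set_tracks_cong) (simp add: swap_rule_def fun_eq_iff tracks_set_tracks)

lemma exchange_exchange: "exchange (exchange x) = x"
  unfolding exchange_def rule_map_def set_tracks_set_tracks
proof (subst (2) set_tracks_tracks[symmetric], rule set_tracks_cong)
  fix s assume b: "block x s"
  show "exchange_rule (set_tracks x (exchange_rule x)) s = tracks x s"
  proof (rule ext)
    fix tb
    show "exchange_rule (set_tracks x (exchange_rule x)) s tb = tracks x s tb"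
    proof (cases tb)
      case True
      then show ?thesis using b by (cases "block x (s-19)") (auto simp: exchange_rule_def block_set_tracks tracks_set_tracks)
    next
      case False
      then show ?thesis using b by (cases "block x (s+19)") (auto simp: exchange_rule_def block_set_tracks tracks_set_tracks)
    qed
  qed
qed

lemma gate_in_aut:
  assumes "bij p"
  shows "gate p \<in> carrier aut_shift"
proof (rule aut_shiftI[where g = "gate (inv_into UNIV p)"])
  have "p \<circ> inv_into UNIV p = id" "inv_into UNIV p \<circ> p = id"
    using surj_iff[of p] inj_iff[of p] bij_is_surj[OF assms] bij_is_inj[OF assms] by auto
  then show "gate p \<circ> gate (inv_into UNIV p) = id" "gate (inv_into UNIV p) \<circ> gate p = id"
    by (simp_all add: gate_comp gate_id)
qed (simp_all add: gate_def continuous_map_rule_map local_rule_gate rule_map_shift_commute)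

lemma swap_in_aut: "swap \<in> carrier aut_shift"
  by (rule aut_shiftI[where g = swap]) (simp_all add: swap_def continuous_map_rule_map local_rule_swap rule_map_shift_commute fun_eq_iff swap_swap[unfolded swap_def])

lemma exchange_in_aut: "exchange \<in> carrier aut_shift"
  by (rule aut_shiftI[where g = exchange]) (simp_all add: exchange_def continuous_map_rule_map local_rule_exchange rule_map_shift_commute fun_eq_iff exchange_exchange[unfolded exchange_def])

definition conveyor :: "(int \<Rightarrow> 'a) \<Rightarrow> int \<Rightarrow> 'a" where
  "conveyor = exchange \<circ> swap"

lemma conveyor_in_aut: "conveyor \<in> carrier aut_shift"
  using monoid.m_closed[OF group.is_monoid[OF group_aut_shift] exchange_in_aut swap_in_aut]
  by (simp add: conveyor_def)

lemma inv_conveyor: "inv\<^bsub>aut_shift\<^esub> conveyor = swap \<circ> exchange"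
  by (rule inv_aut_shift_eq[OF conveyor_in_aut]) (auto simp: conveyor_def swap_swap exchange_exchange)

end


section \<open>Cellwise maps and the absence of free subgroups\<close>

context two_symbols
begin

definition skeleton :: "(int \<Rightarrow> 'a) \<Rightarrow> int \<Rightarrow> 'a" where
  "skeleton x = set_tracks x (\<lambda>_ _. (False, False, False))"

lemma skeleton_set_tracks: "skeleton (set_tracks x F) = skeleton x"
  unfolding skeleton_def set_tracks_set_tracks ..

lemma block_skeleton: "block (skeleton x) s = block x s"
  unfolding skeleton_def block_set_tracks ..

lemma head_skeleton: "block x s \<Longrightarrow> head (skeleton x) s = head x s"
  unfolding skeleton_def by (rule head_set_tracks)

definition cellwise_by ::
    "((int \<Rightarrow> 'a) \<Rightarrow> int \<Rightarrow> bool \<Rightarrow> track \<Rightarrow> track) \<Rightarrow> ((int \<Rightarrow> 'a) \<Rightarrow> int \<Rightarrow> 'a) \<Rightarrow> bool" where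
  "cellwise_by P c \<longleftrightarrow>
     (\<forall>I s tb. bij (P I s tb)) \<and> (\<forall>x. c x = set_tracks x (\<lambda>s tb. P (skeleton x) s tb (tracks x s tb)))"

definition cellwise :: "((int \<Rightarrow> 'a) \<Rightarrow> int \<Rightarrow> 'a) \<Rightarrow> bool" where
  "cellwise c \<longleftrightarrow> (\<exists>P. cellwise_by P c)"

lemma cellwise_by_set_tracks:
  "cellwise_by P c \<Longrightarrow> c (set_tracks x F) = set_tracks x (\<lambda>s tb. P (skeleton x) s tb (F s tb))"
  unfolding cellwise_by_def
  by (auto simp: set_tracks_set_tracks skeleton_set_tracks tracks_set_tracks intro!: set_tracks_cong)

lemma cellwise_comp:
  assumes "cellwise c" "cellwise d" shows "cellwise (c \<circ> d)"
proof -
  obtain P Q where P: "cellwise_by P c" and Q: "cellwise_by Q d" using assms unfolding cellwise_def by blast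
  have "cellwise_by (\<lambda>I s tb. P I s tb \<circ> Q I s tb) (c \<circ> d)"
    unfolding cellwise_by_def
  proof (intro conjI allI)
    fix I s tb show "bij (P I s tb \<circ> Q I s tb)" using P Q unfolding cellwise_by_def by (auto intro: bij_comp)
  next
    fix x
    have "d x = set_tracks x (\<lambda>s tb. Q (skeleton x) s tb (tracks x s tb))" using Q unfolding cellwise_by_def by auto
    then show "(c \<circ> d) x = set_tracks x (\<lambda>s tb. (P (skeleton x) s tb \<circ> Q (skeleton x) s tb) (tracks x s tb))"
      using cellwise_by_set_tracks[OF P] by simp
  qed
  then show ?thesis unfolding cellwise_def by blast
qed

lemma cellwise_inv:
  assumes "cellwise c" shows "\<exists>c'. cellwise c' \<and> c' \<circ> c = id \<and> c \<circ> c' = id"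
proof -
  obtain P where P: "cellwise_by P c" using assms unfolding cellwise_def by blast
  define c' where "c' x = set_tracks x (\<lambda>s tb. inv_into UNIV (P (skeleton x) s tb) (tracks x s tb))" for x
  have bP: "bij (P I s tb)" for I s tb using P unfolding cellwise_by_def by auto
  have P': "cellwise_by (\<lambda>I s tb. inv_into UNIV (P I s tb)) c'"
    unfolding cellwise_by_def c'_def using bP by (auto intro: bij_imp_bij_inv)
  have "c' \<circ> c = id"
  proof (rule ext)
    fix x
    have "c' (c x) = set_tracks x (\<lambda>s tb. inv_into UNIV (P (skeleton x) s tb) (P (skeleton x) s tb (tracks x s tb)))"
      using P cellwise_by_set_tracks[OF P'] unfolding cellwise_by_def by auto
    also have "\<dots> = set_tracks x (tracks x)" using bP by (simp add: bij_is_inj)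
    finally show "(c' \<circ> c) x = id x" by (simp add: set_tracks_tracks)
  qed
  moreover have "c \<circ> c' = id"
  proof (rule ext)
    fix x
    have "c (c' x) = set_tracks x (\<lambda>s tb. P (skeleton x) s tb (inv_into UNIV (P (skeleton x) s tb) (tracks x s tb)))"
      using P' cellwise_by_set_tracks[OF P] unfolding cellwise_by_def by auto
    also have "\<dots> = set_tracks x (tracks x)" using bP by (simp add: bij_is_surj f_inv_into_f)
    finally show "(c \<circ> c') x = id x" by (simp add: set_tracks_tracks)
  qed
  ultimately show ?thesis using P' unfolding cellwise_def by blast
qed

lemma cellwise_by_funpow:
  assumes P: "cellwise_by P c"
  shows "(c ^^ n) x = set_tracks x (\<lambda>s tb. (P (skeleton x) s tb ^^ n) (tracks x s tb))"
proof (induction n)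
  case 0 then show ?case by (simp add: set_tracks_tracks)
next
  case (Suc n) then show ?case by (simp add: cellwise_by_set_tracks[OF P])
qed

lemma cellwise_funpow_exponent:
  assumes "cellwise c"
  shows "c ^^ fact CARD(track \<Rightarrow> track) = id"
proof (rule ext)
  fix x
  obtain P where P: "cellwise_by P c" using assms unfolding cellwise_def by blast
  have bP: "bij (P I s tb)" for I s tb using P unfolding cellwise_by_def by auto
  show "(c ^^ fact CARD(track \<Rightarrow> track)) x = id x"
    using cellwise_by_funpow[OF P] bij_funpow_fact_card_eq_id[OF bP] by (simp add: set_tracks_tracks)
qed

lemma cellwise_gate: "bij p \<Longrightarrow> cellwise (gate p)"
  unfolding cellwise_def
proof (intro exI[of _ "\<lambda>I s tb. if tb \<and> head I s then p else id"])
  assume bp: "bij p"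
  show "cellwise_by (\<lambda>I s tb. if tb \<and> head I s then p else id) (gate p)"
    unfolding cellwise_by_def
  proof (intro conjI allI)
    fix I s tb show "bij (if tb \<and> head I s then p else id)" using bp by simp
  next
    fix x show "gate p x = set_tracks x (\<lambda>s tb. (if tb \<and> head (skeleton x) s then p else id) (tracks x s tb))"
      unfolding gate_def rule_map_def by (rule set_tracks_cong) (auto simp: gate_rule_def head_skeleton fun_eq_iff)
  qed
qed

lemma cellwise_conj_swap:
  assumes "cellwise c" shows "cellwise (swap \<circ> c \<circ> swap)"
proof -
  obtain P where P: "cellwise_by P c" using assms unfolding cellwise_def by blast
  have "cellwise_by (\<lambda>I s tb. P I s (\<not> tb)) (swap \<circ> c \<circ> swap)"
    unfolding cellwise_by_def
  proof (intro conjI allI)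
    fix I s tb show "bij (P I s (\<not> tb))" using P unfolding cellwise_by_def by auto
  next
    fix x
    have "c (swap x) = set_tracks x (\<lambda>s tb. P (skeleton x) s tb (swap_rule x s tb))"
      unfolding swap_def rule_map_def by (rule cellwise_by_set_tracks[OF P])
    then show "(swap \<circ> c \<circ> swap) x = set_tracks x (\<lambda>s tb. P (skeleton x) s (\<not> tb) (tracks x s tb))"
      by (auto simp: swap_def rule_map_def set_tracks_set_tracks swap_rule_def tracks_set_tracks intro!: set_tracks_cong)
  qed
  then show ?thesis unfolding cellwise_def by blast
qed

lemma cellwise_conj_exchange:
  assumes "cellwise c" shows "cellwise (exchange \<circ> c \<circ> exchange)"
proof -
  obtain P where P: "cellwise_by P c" using assms unfolding cellwise_def by blast
  define P' where "P' I s tb = (if tb then (if block I (s-19) then P I (s-19) False else P I s True)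
      else (if block I (s+19) then P I (s+19) True else P I s False))" for I s tb
  have "cellwise_by P' (exchange \<circ> c \<circ> exchange)"
    unfolding cellwise_by_def
  proof (intro conjI allI)
    fix I s tb show "bij (P' I s tb)" using P unfolding cellwise_by_def P'_def by auto
  next
    fix x
    have e: "c (exchange x) = set_tracks x (\<lambda>s tb. P (skeleton x) s tb (exchange_rule x s tb))"
      unfolding exchange_def rule_map_def by (rule cellwise_by_set_tracks[OF P])
    show "(exchange \<circ> c \<circ> exchange) x = set_tracks x (\<lambda>s tb. P' (skeleton x) s tb (tracks x s tb))"
      unfolding o_def e
      unfolding exchange_def rule_map_def set_tracks_set_tracks
    proof (rule set_tracks_cong, rule ext)
      fix s tb assume b: "block x s"
      show "exchange_rule (set_tracks x (\<lambda>s tb. P (skeleton x) s tb (exchange_rule x s tb))) s tb = P' (skeleton x) s tb (tracks x s tb)"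
      proof (cases tb)
        case True
        then show ?thesis using b
          by (cases "block x (s-19)") (auto simp: exchange_rule_def P'_def block_set_tracks tracks_set_tracks block_skeleton)
      next
        case False
        then show ?thesis using b
          by (cases "block x (s+19)") (auto simp: exchange_rule_def P'_def block_set_tracks tracks_set_tracks block_skeleton)
      qed
    qed
  qed
  then show ?thesis unfolding cellwise_def by blast
qed

lemma cellwise_id: "cellwise id"
  using cellwise_gate[of id] by (simp add: gate_id)

abbreviation conveyor_pow :: "int \<Rightarrow> (int \<Rightarrow> 'a) \<Rightarrow> int \<Rightarrow> 'a" where
  "conveyor_pow k \<equiv> conveyor [^]\<^bsub>aut_shift\<^esub> k"

lemma conveyor_pow_add: "conveyor_pow (a + b) = conveyor_pow a \<circ> conveyor_pow b"
  using group.int_pow_mult[OF group_aut_shift conveyor_in_aut] by simp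

lemma conveyor_pow_add_apply: "conveyor_pow a (conveyor_pow b x) = conveyor_pow (a + b) x"
  by (simp add: conveyor_pow_add)

lemma conveyor_pow_1: "conveyor_pow 1 = conveyor"
  and conveyor_pow_minus_1: "conveyor_pow (-1) = swap \<circ> exchange"
  using group.int_pow_1[OF group_aut_shift conveyor_in_aut]
    group.int_pow_neg[OF group_aut_shift conveyor_in_aut, of 1]
  by (simp_all add: inv_conveyor)

lemma cellwise_conj_conveyor_pow:
  assumes "cellwise c"
  shows "cellwise (conveyor_pow k \<circ> c \<circ> conveyor_pow (-k))"
proof (induction k rule: int_induct[where k = 0])
  case base
  then show ?case
    using assms by (simp add: id_def[symmetric])
next
  case (step1 i)
  have "conveyor_pow (i + 1) = conveyor \<circ> conveyor_pow i"
    using conveyor_pow_add[of 1 i] by (simp add: conveyor_pow_1 add.commute)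
  moreover have "conveyor_pow (-(i + 1)) = conveyor_pow (-i) \<circ> (swap \<circ> exchange)"
    using conveyor_pow_add[of "-i" "-1"] by (simp add: conveyor_pow_minus_1)
  ultimately have "conveyor_pow (i + 1) \<circ> c \<circ> conveyor_pow (-(i + 1))
      = exchange \<circ> (swap \<circ> (conveyor_pow i \<circ> c \<circ> conveyor_pow (-i)) \<circ> swap) \<circ> exchange"
    by (simp add: conveyor_def comp_assoc)
  then show ?case
    using step1(2) by (simp only:) (intro cellwise_conj_exchange cellwise_conj_swap)
next
  case (step2 i)
  have "conveyor_pow (i - 1) = (swap \<circ> exchange) \<circ> conveyor_pow i"
    using conveyor_pow_add[of "-1" i] by (simp add: conveyor_pow_minus_1)
  moreover have "conveyor_pow (-(i - 1)) = conveyor_pow (-i) \<circ> conveyor"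
    using conveyor_pow_add[of "-i" 1] by (simp add: conveyor_pow_1)
  ultimately have "conveyor_pow (i - 1) \<circ> c \<circ> conveyor_pow (-(i - 1))
      = swap \<circ> (exchange \<circ> (conveyor_pow i \<circ> c \<circ> conveyor_pow (-i)) \<circ> exchange) \<circ> swap"
    by (simp add: conveyor_def comp_assoc)
  then show ?case
    using step2(2) by (simp only:) (intro cellwise_conj_exchange cellwise_conj_swap)
qed


definition generators :: "((int \<Rightarrow> 'a) \<Rightarrow> int \<Rightarrow> 'a) set" where
  "generators = insert conveyor (gate ` {p. bij p})"

definition gen_group :: "((int \<Rightarrow> 'a) \<Rightarrow> int \<Rightarrow> 'a) set" where
  "gen_group = generate aut_shift generators"

lemma finite_generators: "finite generators"
  by (simp add: generators_def)

lemma generators_in_aut: "generators \<subseteq> carrier aut_shift"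
  using conveyor_in_aut gate_in_aut by (auto simp: generators_def)

lemma subgroup_gen_group: "subgroup gen_group aut_shift"
  unfolding gen_group_def by (rule group.generate_is_subgroup[OF group_aut_shift generators_in_aut])

lemma gen_group_in_aut: "f \<in> gen_group \<Longrightarrow> f \<in> carrier aut_shift"
  using subgroup.subset[OF subgroup_gen_group] by blast

lemma conveyor_pow_in_gen_group: "conveyor_pow k \<in> gen_group"
  using group.subgroup_int_pow_closed[OF group_aut_shift subgroup_gen_group]
    generate.incl[of conveyor generators aut_shift]
  by (simp add: gen_group_def generators_def)

lemma gate_in_gen_group: "bij p \<Longrightarrow> gate p \<in> gen_group"
  unfolding gen_group_def by (rule generate.incl) (simp add: generators_def)

lemma inv_gate:
  assumes "bij p"
  shows "inv\<^bsub>aut_shift\<^esub> (gate p) = gate (inv_into UNIV p)"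
proof (rule inv_aut_shift_eq[OF gate_in_aut[OF assms]])
  have "p \<circ> inv_into UNIV p = id"
    using surj_iff[of p] bij_is_surj[OF assms] by simp
  then show "gate p \<circ> gate (inv_into UNIV p) = id"
    by (simp add: gate_comp gate_id)
qed

lemma gen_group_conveyor_cellwise:
  assumes "f \<in> gen_group"
  obtains k c where "cellwise c" "f = conveyor_pow k \<circ> c"
proof -
  have "\<exists>k c. cellwise c \<and> f = conveyor_pow k \<circ> c"
    using assms unfolding gen_group_def
  proof (induction rule: generate.induct)
    case one
    then show ?case
      using cellwise_id by (metis comp_id aut_shift_one(2) int_pow_0)
  next
    case (incl h)
    then consider "h = conveyor" | p where "bij p" "h = gate p"
      by (auto simp: generators_def)
    then show ?case
    proof cases
      case 1
      then show ?thesis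
        using cellwise_id conveyor_pow_1 by (metis comp_id)
    next
      case 2
      then show ?thesis
        using cellwise_gate by (intro exI[of _ 0] exI[of _ h]) simp
    qed
  next
    case (inv h)
    then consider "h = conveyor" | p where "bij p" "h = gate p"
      by (auto simp: generators_def)
    then show ?case
    proof cases
      case 1
      then show ?thesis
        using cellwise_id conveyor_pow_minus_1 inv_conveyor by (metis comp_id)
    next
      case 2
      then show ?thesis
        using cellwise_gate[OF bij_imp_bij_inv[OF 2(1)]] inv_gate
        by (intro exI[of _ 0] exI[of _ "gate (inv_into UNIV p)"]) simp
    qed
  next
    case (eng f g)
    obtain a c where c: "cellwise c" "f = conveyor_pow a \<circ> c"
      using eng.IH(1) by blast
    obtain b d where d: "cellwise d" "g = conveyor_pow b \<circ> d"
      using eng.IH(2) by blast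
    have "f \<otimes>\<^bsub>aut_shift\<^esub> g = conveyor_pow (a + b) \<circ> ((conveyor_pow (-b) \<circ> c \<circ> conveyor_pow b) \<circ> d)"
      by (simp add: c d fun_eq_iff conveyor_pow_add_apply)
    moreover have "cellwise ((conveyor_pow (-b) \<circ> c \<circ> conveyor_pow b) \<circ> d)"
      using cellwise_conj_conveyor_pow[OF c(1), of "-b"] d(1) by (simp add: cellwise_comp)
    ultimately show ?case
      by blast
  qed
  then show thesis
    using that by blast
qed

lemma inv_conveyor_pow_comp_cellwise:
  assumes "f \<in> carrier aut_shift" "cellwise c" "f = conveyor_pow k \<circ> c"
  obtains c' where "cellwise c'" "inv\<^bsub>aut_shift\<^esub> f = c' \<circ> conveyor_pow (-k)"
proof -
  obtain c' where c': "cellwise c'" "c \<circ> c' = id"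
    using cellwise_inv[OF assms(2)] by blast
  have c_c': "c (c' y) = y" for y
    using fun_cong[OF c'(2)] by simp
  have "f \<circ> (c' \<circ> conveyor_pow (-k)) = id"
    by (rule ext) (simp add: assms(3) c_c' conveyor_pow_add_apply)
  then have "inv\<^bsub>aut_shift\<^esub> f = c' \<circ> conveyor_pow (-k)"
    by (rule inv_aut_shift_eq[OF assms(1)])
  then show thesis
    using that c'(1) by blast
qed

lemma cellwise_commutator:
  assumes "f \<in> gen_group" "g \<in> gen_group"
  shows "cellwise (f \<circ> g \<circ> inv\<^bsub>aut_shift\<^esub> f \<circ> inv\<^bsub>aut_shift\<^esub> g)"
proof -
  obtain n c where c: "cellwise c" "f = conveyor_pow n \<circ> c"
    using gen_group_conveyor_cellwise[OF assms(1)] by blast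
  obtain m d where d: "cellwise d" "g = conveyor_pow m \<circ> d"
    using gen_group_conveyor_cellwise[OF assms(2)] by blast
  obtain c' where c': "cellwise c'" "inv\<^bsub>aut_shift\<^esub> f = c' \<circ> conveyor_pow (-n)"
    using inv_conveyor_pow_comp_cellwise[OF gen_group_in_aut[OF assms(1)] c] by blast
  obtain d' where d': "cellwise d'" "inv\<^bsub>aut_shift\<^esub> g = d' \<circ> conveyor_pow (-m)"
    using inv_conveyor_pow_comp_cellwise[OF gen_group_in_aut[OF assms(2)] d] by blast
  have commutator: "f \<circ> g \<circ> inv\<^bsub>aut_shift\<^esub> f \<circ> inv\<^bsub>aut_shift\<^esub> g =
      (conveyor_pow n \<circ> c \<circ> conveyor_pow (-n)) \<circ> (conveyor_pow (n + m) \<circ> d \<circ> conveyor_pow (-(n + m)))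
      \<circ> (conveyor_pow (n + m) \<circ> c' \<circ> conveyor_pow (-(n + m))) \<circ> (conveyor_pow m \<circ> d' \<circ> conveyor_pow (-m))"
    unfolding c'(2) d'(2) unfolding c(2) d(2) by (simp add: fun_eq_iff conveyor_pow_add_apply)
  show ?thesis
    unfolding commutator by (intro cellwise_comp cellwise_conj_conveyor_pow c(1) d(1) c'(1) d'(1))
qed

lemma not_contains_free_group_rank2_gen_group:
  "\<not> contains_free_group_rank2 (aut_shift\<lparr>carrier := gen_group\<rparr>)"
proof -
  interpret H: group "aut_shift\<lparr>carrier := gen_group\<rparr>"
    by (rule group.subgroup_imp_group[OF group_aut_shift subgroup_gen_group])
  have inv_eq: "inv\<^bsub>aut_shift\<lparr>carrier := gen_group\<rparr>\<^esub> f = inv\<^bsub>aut_shift\<^esub> f" if "f \<in> gen_group" for f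
    by (rule group.m_inv_consistent[OF group_aut_shift subgroup_gen_group that])
  show ?thesis
    using cellwise_funpow_exponent[OF cellwise_commutator]
    by (intro H.not_contains_free_group_rank2_if_commutator_torsion[of "fact CARD(track \<Rightarrow> track)"])
      (simp_all add: inv_eq)
qed

end


section \<open>A perfect family of permutations of the track values\<close>

definition track_index :: "track \<Rightarrow> nat" where
  "track_index v = (if fst v then 4 else 0) + (if fst (snd v) then 2 else 0) + (if snd (snd v) then 1 else 0)"

definition track_of_index :: "nat \<Rightarrow> track" where
  "track_of_index n = (n div 4 mod 2 = 1, n div 2 mod 2 = 1, n mod 2 = 1)"

lemma less_8_cases: "k < (8::nat) \<Longrightarrow> k = 0 \<or> k = 1 \<or> k = 2 \<or> k = 3 \<or> k = 4 \<or> k = 5 \<or> k = 6 \<or> k = 7"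
  by arith

lemma less_6_cases: "i < (6::nat) \<Longrightarrow> i = 0 \<or> i = 1 \<or> i = 2 \<or> i = 3 \<or> i = 4 \<or> i = 5"
  by arith

lemma track_of_index_track_index [simp]: "track_of_index (track_index v) = v"
  by (cases v) (auto simp: track_of_index_def track_index_def)

lemma track_index_track_of_index: "n < 8 \<Longrightarrow> track_index (track_of_index n) = n"
  by (drule less_8_cases) (auto simp: track_of_index_def track_index_def)

lemma track_fun_eqI:
  fixes f g :: "track \<Rightarrow> track"
  assumes "\<And>k. k < 8 \<Longrightarrow> f (track_of_index k) = g (track_of_index k)"
  shows "f = g"
proof
  fix v
  have "track_index v < 8"
    by (auto simp: track_index_def)
  then show "f v = g v"
    using assms[of "track_index v"] by simp
qed

definition perm_of_table :: "nat list \<Rightarrow> track \<Rightarrow> track" where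
  "perm_of_table L v = track_of_index (L ! track_index v)"

lemma perm_of_table_track_of_index: "k < 8 \<Longrightarrow> perm_of_table L (track_of_index k) = track_of_index (L ! k)"
  by (simp add: perm_of_table_def track_index_track_of_index)

text \<open>Six even permutations of the track values with index below 5, listed by the images of the
  indices: the \<open>\<iota>\<close>-th is the commutator of those numbered \<open>comm_left ! \<iota>\<close> and \<open>comm_right ! \<iota>\<close>,
  and its inverse is the commutator of their inverses. Such a family exists because \<open>A\<^sub>5\<close> is perfect.\<close>
definition perm_table :: "nat list list" where
  "perm_table = [[4, 1, 0, 3, 2, 5, 6, 7], [1, 2, 0, 3, 4, 5, 6, 7], [3, 1, 0, 2, 4, 5, 6, 7],
    [2, 3, 0, 1, 4, 5, 6, 7], [2, 1, 0, 4, 3, 5, 6, 7], [2, 4, 0, 3, 1, 5, 6, 7]]"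

definition perm_inv_table :: "nat list list" where
  "perm_inv_table = [[2, 1, 4, 3, 0, 5, 6, 7], [2, 0, 1, 3, 4, 5, 6, 7], [2, 1, 3, 0, 4, 5, 6, 7],
    [2, 3, 0, 1, 4, 5, 6, 7], [2, 1, 0, 4, 3, 5, 6, 7], [2, 4, 0, 3, 1, 5, 6, 7]]"

definition comm_left :: "nat list" where "comm_left = [3, 4, 5, 2, 2, 1]"

definition comm_right :: "nat list" where "comm_right = [0, 1, 2, 1, 0, 0]"

definition table_perm :: "nat \<Rightarrow> track \<Rightarrow> track" where
  "table_perm i = perm_of_table (perm_table ! i)"

definition table_perm_inv :: "nat \<Rightarrow> track \<Rightarrow> track" where
  "table_perm_inv i = perm_of_table (perm_inv_table ! i)"

lemma table_perm_comp_inv: "i < 6 \<Longrightarrow> table_perm i \<circ> table_perm_inv i = id"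
  by (rule track_fun_eqI) (auto dest!: less_6_cases less_8_cases
      simp: table_perm_def table_perm_inv_def perm_of_table_track_of_index perm_table_def perm_inv_table_def)

lemma table_perm_inv_comp: "i < 6 \<Longrightarrow> table_perm_inv i \<circ> table_perm i = id"
  by (rule track_fun_eqI) (auto dest!: less_6_cases less_8_cases
      simp: table_perm_def table_perm_inv_def perm_of_table_track_of_index perm_table_def perm_inv_table_def)

lemma bij_table_perm: "i < 6 \<Longrightarrow> bij (table_perm i)"
  using table_perm_comp_inv table_perm_inv_comp o_bij by blast

lemma comm_left_right_less: "i < 6 \<Longrightarrow> comm_left ! i < 6 \<and> comm_right ! i < 6"
  by (drule less_6_cases) (auto simp: comm_left_def comm_right_def)

lemma table_perm_commutator:
  "i < 6 \<Longrightarrow> table_perm (comm_left ! i) \<circ> table_perm (comm_right ! i)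
     \<circ> table_perm_inv (comm_left ! i) \<circ> table_perm_inv (comm_right ! i) = table_perm i"
  by (rule track_fun_eqI) (auto dest!: less_6_cases less_8_cases
      simp: table_perm_def table_perm_inv_def perm_of_table_track_of_index perm_table_def
        perm_inv_table_def comm_left_def comm_right_def)

lemma table_perm_inv_commutator:
  "i < 6 \<Longrightarrow> table_perm_inv (comm_left ! i) \<circ> table_perm_inv (comm_right ! i)
     \<circ> table_perm (comm_left ! i) \<circ> table_perm (comm_right ! i) = table_perm_inv i"
  by (rule track_fun_eqI) (auto dest!: less_6_cases less_8_cases
      simp: table_perm_def table_perm_inv_def perm_of_table_track_of_index perm_table_def
        perm_inv_table_def comm_left_def comm_right_def)

lemma table_perm_0_moves: "table_perm 0 (track_of_index 0) \<noteq> track_of_index 0"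
  by (simp add: table_perm_def perm_of_table_def track_index_def perm_table_def track_of_index_def)


section \<open>The group is not virtually solvable\<close>

context two_symbols
begin

text \<open>A block at every multiple of 19, all lamps off, and the head bit set only in the block at 0.\<close>
definition periodic_config :: "int \<Rightarrow> 'a" where
  "periodic_config k = (if k mod 19 \<le> 3 \<or> k = 5 then sym1 else sym0)"

lemma block_periodic_config: "block periodic_config s \<longleftrightarrow> 19 dvd s"
proof
  assume "block periodic_config s"
  then have h: "periodic_config (s+2) = sym1" "periodic_config (s+3) = sym1" "periodic_config (s+4) = sym0" by (simp_all add: block_def)
  have A0: "(s+3) mod 19 \<le> 3 \<or> s = 2" using h(2) sym0_neq_sym1 by (auto simp: periodic_config_def split: if_splits)
  have "s \<noteq> 2" using h(1) sym0_neq_sym1 by (auto simp: periodic_config_def)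
  then have A: "(s+3) mod 19 \<le> 3" using A0 by simp
  have B: "\<not> (s+4) mod 19 \<le> 3" using h(3) sym0_neq_sym1 by (auto simp: periodic_config_def split: if_splits)
  show "19 dvd s" using A B by presburger
next
  assume d: "19 dvd s"
  then obtain q where q: "s = 19 * q" by blast
  have m: "(s + c) mod 19 = c" if "0 \<le> c" "c < 19" for c
  proof -
    have "(s + c) mod 19 = c mod 19" unfolding q by (simp add: mod_add_left_eq[symmetric])
    then show ?thesis using that by simp
  qed
  have n: "s + c \<noteq> 5" if "c \<in> {4,6,8,10,12,14,16,18}" for c
  proof
    assume "s + c = 5"
    then have "(s + c) mod 19 = 5" by simp
    then show False using m[of c] that by auto
  qed
  have mm: "periodic_config (s + c) = (if c \<le> 3 then sym1 else sym0)" if "c \<in> {0,1,2,3,4,6,8,10,12,14,16,18}" for c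
    using m[of c] n[of c] that unfolding periodic_config_def by auto
  have z: "periodic_config s = sym1" using m[of 0] by (simp add: periodic_config_def)
  show "block periodic_config s"
    using z mm[of 1] mm[of 2] mm[of 3] mm[of 4] mm[of 6] mm[of 8] mm[of 10] mm[of 12] mm[of 14] mm[of 16] mm[of 18]
    unfolding block_def is_bit_def periodic_config_def[of "s+5"] periodic_config_def[of "s+7"] periodic_config_def[of "s+9"] periodic_config_def[of "s+11"]
      periodic_config_def[of "s+13"] periodic_config_def[of "s+15"] periodic_config_def[of "s+17"]
    by simp
qed

lemma head_periodic_config: "19 dvd s \<Longrightarrow> head periodic_config s \<longleftrightarrow> s = 0"
proof -
  assume "19 dvd s"
  then obtain q where "s = 19 * q"
    by blast
  then have "(s + 5) mod 19 = 5"
    by simp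
  then show ?thesis
    using sym0_neq_sym1 by (simp add: head_def bit_at_def periodic_config_def)
qed

lemma rule_map_periodic:
  "rule_map \<Phi> (set_tracks periodic_config F) = set_tracks periodic_config (\<Phi> (set_tracks periodic_config F))"
  by (simp add: rule_map_def set_tracks_set_tracks)

lemma swap_periodic:
  "swap (set_tracks periodic_config F) = set_tracks periodic_config (\<lambda>s tb. F s (\<not> tb))"
  unfolding swap_def rule_map_periodic
  by (rule set_tracks_cong) (simp add: swap_rule_def tracks_set_tracks fun_eq_iff)

lemma exchange_periodic:
  "exchange (set_tracks periodic_config F)
    = set_tracks periodic_config (\<lambda>s tb. if tb then F (s - 19) False else F (s + 19) True)"
  unfolding exchange_def rule_map_periodic
  by (rule set_tracks_cong)
    (auto simp: exchange_rule_def tracks_set_tracks block_set_tracks block_periodic_config fun_eq_iff)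

lemma gate_periodic:
  "gate p (set_tracks periodic_config F)
    = set_tracks periodic_config (\<lambda>s tb. if tb \<and> s = 0 then p (F s tb) else F s tb)"
  unfolding gate_def rule_map_periodic
  by (rule set_tracks_cong)
    (auto simp: gate_rule_def tracks_set_tracks head_set_tracks fun_eq_iff head_periodic_config block_periodic_config)

definition shift_tracks :: "int \<Rightarrow> (int \<Rightarrow> bool \<Rightarrow> track) \<Rightarrow> int \<Rightarrow> bool \<Rightarrow> track" where
  "shift_tracks n F s tb = (if tb then F (s - 19 * n) True else F (s + 19 * n) False)"

lemma shift_tracks_shift_tracks: "shift_tracks m (shift_tracks n F) = shift_tracks (m + n) F"
  by (auto simp: shift_tracks_def fun_eq_iff algebra_simps)

lemma conveyor_periodic:
  "conveyor (set_tracks periodic_config F) = set_tracks periodic_config (shift_tracks 1 F)"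
  unfolding conveyor_def comp_apply swap_periodic exchange_periodic
  by (rule arg_cong[where f = "set_tracks periodic_config"]) (auto simp: shift_tracks_def fun_eq_iff)

lemma inv_conveyor_periodic:
  "(swap \<circ> exchange) (set_tracks periodic_config F) = set_tracks periodic_config (shift_tracks (-1) F)"
  unfolding comp_apply swap_periodic exchange_periodic
  by (rule arg_cong[where f = "set_tracks periodic_config"]) (auto simp: shift_tracks_def fun_eq_iff)

lemma conveyor_pow_periodic:
  "conveyor_pow n (set_tracks periodic_config F) = set_tracks periodic_config (shift_tracks n F)"
proof (induction n arbitrary: F rule: int_induct[where k = 0])
  case base
  have "shift_tracks 0 F = F"
    by (auto simp: shift_tracks_def fun_eq_iff)
  then show ?case
    by simp
next
  case (step1 i)
  have "conveyor_pow (i + 1) (set_tracks periodic_config F) = conveyor (conveyor_pow i (set_tracks periodic_config F))"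
    using conveyor_pow_add_apply[of 1 i] by (simp add: conveyor_pow_1 add.commute)
  then show ?case
    by (simp only: step1(2) conveyor_periodic shift_tracks_shift_tracks) (simp add: add.commute)
next
  case (step2 i)
  have "conveyor_pow (i - 1) (set_tracks periodic_config F) = (swap \<circ> exchange) (conveyor_pow i (set_tracks periodic_config F))"
    using conveyor_pow_add_apply[of "-1" i] by (simp add: conveyor_pow_minus_1)
  then show ?case
    by (simp only: step2(2) inv_conveyor_periodic shift_tracks_shift_tracks) (simp add: add.commute)
qed

definition gate_at :: "int \<Rightarrow> (track \<Rightarrow> track) \<Rightarrow> (int \<Rightarrow> 'a) \<Rightarrow> int \<Rightarrow> 'a" where
  "gate_at k p = conveyor_pow k \<circ> gate p \<circ> conveyor_pow (-k)"

definition update_track :: "int \<Rightarrow> (track \<Rightarrow> track) \<Rightarrow> (int \<Rightarrow> bool \<Rightarrow> track) \<Rightarrow> int \<Rightarrow> bool \<Rightarrow> track" where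
  "update_track s\<^sub>0 p F s tb = (if tb \<and> s = s\<^sub>0 then p (F s tb) else F s tb)"

lemma gate_at_periodic:
  "gate_at k p (set_tracks periodic_config F) = set_tracks periodic_config (update_track (19 * k) p F)"
  unfolding gate_at_def comp_apply conveyor_pow_periodic gate_periodic
  by (rule arg_cong[where f = "set_tracks periodic_config"])
    (auto simp: shift_tracks_def update_track_def fun_eq_iff)

lemma gate_at_in_gen_group: "bij p \<Longrightarrow> gate_at k p \<in> gen_group"
  using subgroup.m_closed[OF subgroup_gen_group] conveyor_pow_in_gen_group gate_in_gen_group
  by (simp add: gate_at_def)

lemma inv_gate_at:
  assumes "bij p" "p \<circ> q = id"
  shows "inv\<^bsub>aut_shift\<^esub> (gate_at k p) = gate_at k q"
proof (rule inv_aut_shift_eq[OF gen_group_in_aut[OF gate_at_in_gen_group[OF assms(1)]]])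
  have "gate_at k p \<circ> gate_at k q = conveyor_pow k \<circ> (gate p \<circ> gate q) \<circ> conveyor_pow (-k)"
    by (simp add: gate_at_def fun_eq_iff conveyor_pow_add_apply)
  also have "\<dots> = id"
    by (simp only: gate_comp assms(2) gate_id comp_id) (simp add: fun_eq_iff conveyor_pow_add_apply)
  finally show "gate_at k p \<circ> gate_at k q = id" .
qed

definition update_pair ::
    "int \<Rightarrow> int \<Rightarrow> (track \<Rightarrow> track) \<Rightarrow> (track \<Rightarrow> track) \<Rightarrow> (int \<Rightarrow> bool \<Rightarrow> track) \<Rightarrow> int \<Rightarrow> bool \<Rightarrow> track" where
  "update_pair i j p q F = update_track (19 * i) p (update_track (19 * j) q F)"

lemma update_pair_update_pair:
  "i \<noteq> j \<Longrightarrow> update_pair i j p q (update_pair i j p' q' F) = update_pair i j (p \<circ> p') (q \<circ> q') F"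
  by (auto simp: update_pair_def update_track_def fun_eq_iff)

lemma update_pair_id: "update_pair i j id id F = F"
  by (auto simp: update_pair_def update_track_def fun_eq_iff)

definition acts_by_pair :: "int \<Rightarrow> int \<Rightarrow> (track \<Rightarrow> track) \<Rightarrow> (track \<Rightarrow> track) \<Rightarrow> ((int \<Rightarrow> 'a) \<Rightarrow> int \<Rightarrow> 'a) \<Rightarrow> bool" where
  "acts_by_pair i j p q f \<longleftrightarrow>
     (\<forall>F. f (set_tracks periodic_config F) = set_tracks periodic_config (update_pair i j p q F))"

lemma acts_by_pair_comp:
  "i \<noteq> j \<Longrightarrow> acts_by_pair i j p q f \<Longrightarrow> acts_by_pair i j p' q' g \<Longrightarrow> acts_by_pair i j (p \<circ> p') (q \<circ> q') (f \<circ> g)"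
  by (simp add: acts_by_pair_def update_pair_update_pair)

lemma acts_by_pair_inv:
  assumes "f \<in> carrier aut_shift" "acts_by_pair i j p q f" "i \<noteq> j" "p \<circ> q = id" "q \<circ> p = id"
  shows "acts_by_pair i j q p (inv\<^bsub>aut_shift\<^esub> f)"
  unfolding acts_by_pair_def
proof
  fix F
  have inv_f: "(inv\<^bsub>aut_shift\<^esub> f) (f y) = y" for y
    using fun_cong[OF group.l_inv[OF group_aut_shift assms(1)], of y] by simp
  have "f (set_tracks periodic_config (update_pair i j q p F)) = set_tracks periodic_config F"
    using assms(2-5) by (simp add: acts_by_pair_def update_pair_update_pair update_pair_id)
  then show "(inv\<^bsub>aut_shift\<^esub> f) (set_tracks periodic_config F) = set_tracks periodic_config (update_pair i j q p F)"
    using inv_f by metis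
qed

lemma not_acts_by_pair_id: "i \<noteq> j \<Longrightarrow> \<not> acts_by_pair i j (table_perm 0) q id"
proof
  assume "i \<noteq> j" and "acts_by_pair i j (table_perm 0) q id"
  then have "set_tracks periodic_config (\<lambda>_ _. track_of_index 0)
      = set_tracks periodic_config (update_pair i j (table_perm 0) q (\<lambda>_ _. track_of_index 0))"
    by (simp add: acts_by_pair_def)
  then have "tracks (set_tracks periodic_config (\<lambda>_ _. track_of_index 0)) (19 * i) True
      = tracks (set_tracks periodic_config (update_pair i j (table_perm 0) q (\<lambda>_ _. track_of_index 0))) (19 * i) True"
    by simp
  moreover have "block periodic_config (19 * i)"
    by (simp add: block_periodic_config)
  ultimately show False
    using table_perm_0_moves \<open>i \<noteq> j\<close> by (simp add: tracks_set_tracks update_pair_def update_track_def)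
qed

lemma acts_by_pair_gate_at: "acts_by_pair i j p q (gate_at i p \<circ> gate_at j q)"
  by (simp add: acts_by_pair_def gate_at_periodic update_pair_def)

lemma acts_by_pair_table_commutator:
  assumes "i \<noteq> j" "\<iota> < 6" "f \<in> carrier aut_shift" "g \<in> carrier aut_shift"
    and f: "acts_by_pair i j (table_perm (comm_left ! \<iota>)) (table_perm_inv (comm_left ! \<iota>)) f"
    and g: "acts_by_pair i j (table_perm (comm_right ! \<iota>)) (table_perm_inv (comm_right ! \<iota>)) g"
  shows "acts_by_pair i j (table_perm \<iota>) (table_perm_inv \<iota>)
    (f \<circ> g \<circ> inv\<^bsub>aut_shift\<^esub> f \<circ> inv\<^bsub>aut_shift\<^esub> g)"
proof -
  let ?a = "comm_left ! \<iota>" and ?b = "comm_right ! \<iota>"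
  have "?a < 6" "?b < 6"
    using comm_left_right_less assms(2) by simp_all
  then have "acts_by_pair i j (table_perm_inv ?a) (table_perm ?a) (inv\<^bsub>aut_shift\<^esub> f)"
    "acts_by_pair i j (table_perm_inv ?b) (table_perm ?b) (inv\<^bsub>aut_shift\<^esub> g)"
    using acts_by_pair_inv[OF assms(3) f assms(1)] acts_by_pair_inv[OF assms(4) g assms(1)]
      table_perm_comp_inv table_perm_inv_comp by simp_all
  then have "acts_by_pair i j
      (table_perm ?a \<circ> table_perm ?b \<circ> table_perm_inv ?a \<circ> table_perm_inv ?b)
      (table_perm_inv ?a \<circ> table_perm_inv ?b \<circ> table_perm ?a \<circ> table_perm ?b)
      (f \<circ> g \<circ> inv\<^bsub>aut_shift\<^esub> f \<circ> inv\<^bsub>aut_shift\<^esub> g)"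
    by (intro acts_by_pair_comp[OF assms(1)] f g)
  then show ?thesis
    using table_perm_commutator[OF assms(2)] table_perm_inv_commutator[OF assms(2)] by simp
qed

lemma not_virtually_solvable_gen_group: "\<not> virtually_solvable (aut_shift\<lparr>carrier := gen_group\<rparr>)"
proof
  let ?G = "aut_shift\<lparr>carrier := gen_group\<rparr>"
  interpret G: group ?G
    by (rule group.subgroup_imp_group[OF group_aut_shift subgroup_gen_group])
  assume "virtually_solvable ?G"
  then obtain K where K: "subgroup K ?G" "finite (rcosets\<^bsub>?G\<^esub> K)" and solvable: "solvable (?G\<lparr>carrier := K\<rparr>)"
    unfolding virtually_solvable_def by blast
  have K_aut: "K \<subseteq> carrier aut_shift"
    using subgroup.subset[OF K(1)] gen_group_in_aut by auto
  have inv_G: "inv\<^bsub>?G\<^esub> f = inv\<^bsub>aut_shift\<^esub> f" if "f \<in> gen_group" for f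
    by (rule group.m_inv_consistent[OF group_aut_shift subgroup_gen_group that])
  have in_G: "gate_at (int n) (table_perm \<iota>) \<in> carrier ?G" if "\<iota> \<in> {..<6}" for n \<iota>
    using gate_at_in_gen_group bij_table_perm that by simp
  have "\<exists>m n :: nat. m \<noteq> n \<and>
      (\<forall>\<iota>\<in>{..<6}. gate_at (int m) (table_perm \<iota>) \<otimes>\<^bsub>?G\<^esub> inv\<^bsub>?G\<^esub> gate_at (int n) (table_perm \<iota>) \<in> K)"
    by (rule G.finite_index_pigeonhole[where g = "\<lambda>n \<iota>. gate_at (int n) (table_perm \<iota>)"])
      (use K in_G in auto)
  then obtain m n :: nat where "m \<noteq> n"
    and mn: "\<forall>\<iota>\<in>{..<6}. gate_at (int m) (table_perm \<iota>) \<otimes>\<^bsub>?G\<^esub> inv\<^bsub>?G\<^esub> gate_at (int n) (table_perm \<iota>) \<in> K"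
    by (elim exE conjE)
  then have int_mn: "int m \<noteq> int n"
    by simp
  interpret K: group "?G\<lparr>carrier := K\<rparr>"
    by (rule G.subgroup_imp_group[OF K(1)])
  have inv_K: "inv\<^bsub>?G\<lparr>carrier := K\<rparr>\<^esub> f = inv\<^bsub>aut_shift\<^esub> f" if "f \<in> K" for f
    using G.m_inv_consistent[OF K(1) that] inv_G subgroup.subset[OF K(1)] that by auto
  have "\<not> solvable (?G\<lparr>carrier := K\<rparr>)"
  proof (rule K.not_solvable_if_commutator_closed_family[where I = "{..<6}" and \<iota>\<^sub>0 = 0
        and P = "\<lambda>\<iota>. acts_by_pair (int m) (int n) (table_perm \<iota>) (table_perm_inv \<iota>)"
        and left = "\<lambda>\<iota>. comm_left ! \<iota>" and right = "\<lambda>\<iota>. comm_right ! \<iota>"])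
    show "\<exists>f\<in>carrier (?G\<lparr>carrier := K\<rparr>). acts_by_pair (int m) (int n) (table_perm \<iota>) (table_perm_inv \<iota>) f"
      if \<iota>: "\<iota> \<in> {..<6}" for \<iota>
    proof
      have "inv\<^bsub>?G\<^esub> gate_at (int n) (table_perm \<iota>) = gate_at (int n) (table_perm_inv \<iota>)"
        using \<iota> inv_G gate_at_in_gen_group bij_table_perm inv_gate_at table_perm_comp_inv by simp
      then show "gate_at (int m) (table_perm \<iota>) \<circ> gate_at (int n) (table_perm_inv \<iota>) \<in> carrier (?G\<lparr>carrier := K\<rparr>)"
        using bspec[OF mn \<iota>] by simp
    qed (rule acts_by_pair_gate_at)
    show "comm_left ! \<iota> \<in> {..<6} \<and> comm_right ! \<iota> \<in> {..<6}" if "\<iota> \<in> {..<6}" for \<iota>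
      using comm_left_right_less that by simp
    fix \<iota> f g
    assume "\<iota> \<in> {..<6}" and "f \<in> carrier (?G\<lparr>carrier := K\<rparr>)" "g \<in> carrier (?G\<lparr>carrier := K\<rparr>)"
      and "acts_by_pair (int m) (int n) (table_perm (comm_left ! \<iota>)) (table_perm_inv (comm_left ! \<iota>)) f"
      and "acts_by_pair (int m) (int n) (table_perm (comm_right ! \<iota>)) (table_perm_inv (comm_right ! \<iota>)) g"
    then show "acts_by_pair (int m) (int n) (table_perm \<iota>) (table_perm_inv \<iota>)
        (f \<otimes>\<^bsub>?G\<lparr>carrier := K\<rparr>\<^esub> g \<otimes>\<^bsub>?G\<lparr>carrier := K\<rparr>\<^esub> inv\<^bsub>?G\<lparr>carrier := K\<rparr>\<^esub> f
          \<otimes>\<^bsub>?G\<lparr>carrier := K\<rparr>\<^esub> inv\<^bsub>?G\<lparr>carrier := K\<rparr>\<^esub> g)"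
      using acts_by_pair_table_commutator[OF int_mn] K_aut inv_K by auto
  next
    show "\<not> acts_by_pair (int m) (int n) (table_perm 0) (table_perm_inv 0) \<one>\<^bsub>?G\<lparr>carrier := K\<rparr>\<^esub>"
      using not_acts_by_pair_id[OF int_mn] by simp
  qed simp
  then show False
    using solvable by simp
qed

end


theorem mainTheorem1:
  assumes "CARD('a::finite) \<ge> 2"
  shows "\<exists>H. subgroup H (aut_shift :: ((int \<Rightarrow> 'a) \<Rightarrow> (int \<Rightarrow> 'a)) monoid)
            \<and> finitely_generated_subgroup (aut_shift :: ((int \<Rightarrow> 'a) \<Rightarrow> (int \<Rightarrow> 'a)) monoid) H
            \<and> \<not> virtually_solvable ((aut_shift :: ((int \<Rightarrow> 'a) \<Rightarrow> (int \<Rightarrow> 'a)) monoid)\<lparr>carrier := H\<rparr>)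
            \<and> \<not> contains_free_group_rank2 ((aut_shift :: ((int \<Rightarrow> 'a) \<Rightarrow> (int \<Rightarrow> 'a)) monoid)\<lparr>carrier := H\<rparr>)"
proof -
  have "\<not> CARD('a) \<le> Suc 0"
    using assms by simp
  then obtain a b :: 'a where "a \<noteq> b"
    by (auto simp: card_le_Suc0_iff_eq)
  then interpret two_symbols a b
    by unfold_locales
  show ?thesis
    using subgroup_gen_group finite_generators generators_in_aut
      not_virtually_solvable_gen_group not_contains_free_group_rank2_gen_group
    by (intro exI[of _ gen_group]) (auto simp: finitely_generated_subgroup_def gen_group_def)
qed

end
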